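(* Fix an integer $\kappa\ge1$ and sequences $x_1,\ldots,x_n$ and $y_1,\ldots,y_n$ in $\mathfrak{g}^{(\kappa)}(\mathbb{R}^d)$, and set $g_i=\pi_i(H(x_1,\ldots,x_n))$, $\tilde g_i=\pi_i(H(y_1,\ldots,y_n))$, where $H(x_1,\ldots,x_n)=\log(e^{x_1}\otimes\cdots\otimes e^{x_n})$. Then for every integer $1\le m\le\kappa$, $$\big\|\pi_m\big(e^{x_1}\otimes\cdots\otimes e^{x_n}-e^{y_1}\otimes\cdots\otimes e^{y_n}\big)\big\|_{(\mathbb{R}^d)^{\otimes m}}\le\sum_{k=1}^m\frac1{k!}\sum_{\substack{i_1,\ldots,i_k>0\\ i_1+\cdots+i_k=m}}\Big\|\sum_{j=1}^kg_{i_1}\otimes\cdots\otimes g_{i_{j-1}}\otimes(g_{i_j}-\tilde g_{i_j})\otimes\tilde g_{i_{j+1}}\otimes\cdots\otimes\tilde g_{i_k}\Big\|_{(\mathbb{R}^d)^{\otimes m}}.$$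
   Context: $T^{(\kappa)}(\mathbb{R}^d)=\bigoplus_{k=0}^\kappa(\mathbb{R}^d)^{\otimes k}$ is the truncated tensor algebra, $\pi_i$ projection onto $(\mathbb{R}^d)^{\otimes i}$, which carries the Euclidean norm in the basis $e_{j_1}\otimes\cdots\otimes e_{j_i}$. $e^{x}=\exp_\kappa(x)=\sum_{k=0}^\kappa x^{\otimes k}/k!$ and $\log(a)=\sum_{k=1}^\kappa\frac{(-1)^{k+1}}k(a-1)^{\otimes k}$ for $a$ with scalar part $1$. $\mathfrak{g}^{(\kappa)}(\mathbb{R}^d)$ is the free step-$\kappa$ nilpotent Lie algebra: the Lie subalgebra of $T^{(\kappa)}$ generated by $\mathbb{R}^d$ under $[a,b]=a\otimes b-b\otimes a$. *)

theory Defs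
  imports Complex_Main
begin

text \<open>An element is represented by its
coefficient function on words: a w is the coefficient of e_{w_1} (x) ... (x) e_{w_k}
where w = [w_1,...,w_k] (letters are indices, intended < d).  Only words of length
at most kappa carry nonzero coefficients for the algebra elements considered.\<close>

type_synonym tensor = "nat list \<Rightarrow> real"

definition words :: "nat \<Rightarrow> nat \<Rightarrow> nat list set" where
  "words d k = {w. length w = k \<and> set w \<subseteq> {..<d}}"

definition tmul :: "nat \<Rightarrow> tensor \<Rightarrow> tensor \<Rightarrow> tensor" where
  "tmul \<kappa> a b = (\<lambda>w. if length w \<le> \<kappa>
      then (\<Sum>i\<le>length w. a (take i w) * b (drop i w)) else 0)"

definition tone :: tensor where
  "tone = (\<lambda>w. if w = [] then 1 else 0)"

fun tpow :: "nat \<Rightarrow> tensor \<Rightarrow> nat \<Rightarrow> tensor" where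
  "tpow \<kappa> a 0 = tone"
| "tpow \<kappa> a (Suc n) = tmul \<kappa> a (tpow \<kappa> a n)"

definition tprod :: "nat \<Rightarrow> tensor list \<Rightarrow> tensor" where
  "tprod \<kappa> as = foldr (tmul \<kappa>) as tone"

definition proj :: "nat \<Rightarrow> tensor \<Rightarrow> tensor" where
  "proj i a = (\<lambda>w. if length w = i then a w else 0)"

definition texp :: "nat \<Rightarrow> tensor \<Rightarrow> tensor" where
  "texp \<kappa> x = (\<lambda>w. \<Sum>k\<le>\<kappa>. (1 / fact k) * tpow \<kappa> x k w)"

definition tlog :: "nat \<Rightarrow> tensor \<Rightarrow> tensor" where
  "tlog \<kappa> a = (\<lambda>w. \<Sum>k=1..\<kappa>.
      ((-1) ^ (k + 1) / real k) * tpow \<kappa> (\<lambda>v. a v - tone v) k w)"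

definition tnorm :: "nat \<Rightarrow> nat \<Rightarrow> tensor \<Rightarrow> real" where
  "tnorm d m a = sqrt (\<Sum>w\<in>words d m. (a w)\<^sup>2)"

text \<open>Free step-kappa nilpotent Lie algebra g^(kappa)(R^d): the Lie subalgebra
of T^(kappa)(R^d) generated by R^d (degree-one tensors) under [a,b] = a(x)b - b(x)a.\<close>
inductive_set lie_alg :: "nat \<Rightarrow> nat \<Rightarrow> tensor set" for d \<kappa> where
  gen: "(\<And>w. w \<notin> words d 1 \<Longrightarrow> v w = 0) \<Longrightarrow> v \<in> lie_alg d \<kappa>"
| add: "a \<in> lie_alg d \<kappa> \<Longrightarrow> b \<in> lie_alg d \<kappa> \<Longrightarrow> (\<lambda>w. a w + b w) \<in> lie_alg d \<kappa>"
| smult: "a \<in> lie_alg d \<kappa> \<Longrightarrow> (\<lambda>w. c * a w) \<in> lie_alg d \<kappa>"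
| bracket: "a \<in> lie_alg d \<kappa> \<Longrightarrow> b \<in> lie_alg d \<kappa> \<Longrightarrow>
     (\<lambda>w. tmul \<kappa> a b w - tmul \<kappa> b a w) \<in> lie_alg d \<kappa>"

definition expprod :: "nat \<Rightarrow> tensor list \<Rightarrow> tensor" where
  "expprod \<kappa> xs = tprod \<kappa> (map (texp \<kappa>) xs)"

definition Hcomp :: "nat \<Rightarrow> tensor list \<Rightarrow> nat \<Rightarrow> tensor" where
  "Hcomp \<kappa> xs i = proj i (tlog \<kappa> (expprod \<kappa> xs))"

definition compositions :: "nat \<Rightarrow> nat \<Rightarrow> nat list set" where
  "compositions k m = {is. length is = k \<and> (\<forall>i\<in>set is. 0 < i) \<and> sum_list is = m}"

end

theory Submission
  imports Defs "HOL-Analysis.L2_Norm" "HOL-Computational_Algebra.Formal_Power_Series"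
begin

text \<open>Each \<open>x\<^sub>i\<close> has no scalar part, so \<open>a = exp x\<^sub>1 \<otimes> \<dots> \<otimes> exp x\<^sub>n\<close> has scalar
  part 1 and \<open>a - 1\<close> is nilpotent in the truncated algebra. Evaluating formal power series at
  \<open>a - 1\<close> is a ring homomorphism, so the formal identity \<open>exp (ln (1 + X)) = 1 + X\<close> gives
  \<open>a = exp (log a)\<close>. For \<open>H = log a\<close>, which has no scalar part, the degree-\<open>m\<close> part of
  \<open>H\<^sup>k\<close> is the sum over compositions \<open>(i\<^sub>1, \<dots>, i\<^sub>k)\<close> of \<open>m\<close> of \<open>g\<^sub>i\<^sub>1 \<otimes> \<dots> \<otimes> g\<^sub>i\<^sub>k\<close>.
  Subtracting the two such expansions, each difference of products telescopes, and the
  triangle inequality of the Euclidean norm gives the bound.\<close>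

unbundle fps_syntax

definition ttrunc :: "nat \<Rightarrow> tensor \<Rightarrow> tensor" where
  "ttrunc \<kappa> a = (\<lambda>w. if length w \<le> \<kappa> then a w else 0)"

lemma tmul_Nil [simp]: "tmul \<kappa> a b [] = a [] * b []"
  by (simp add: tmul_def)

lemma tmul_ttrunc [simp]: "ttrunc \<kappa> (tmul \<kappa> a b) = tmul \<kappa> a b"
  by (auto simp: ttrunc_def tmul_def)

lemma ttrunc_tone [simp]: "ttrunc \<kappa> tone = tone"
  by (auto simp: ttrunc_def tone_def)

lemma tmul_tone_left: "tmul \<kappa> tone b = ttrunc \<kappa> b"
proof
  fix w
  have "(\<Sum>i\<le>length w. tone (take i w) * b (drop i w)) = (\<Sum>i\<le>length w. if i = 0 then b w else 0)"
    by (rule sum.cong) (auto simp: tone_def)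
  then show "tmul \<kappa> tone b w = ttrunc \<kappa> b w"
    by (simp add: tmul_def ttrunc_def)
qed

lemma tmul_tone_right: "tmul \<kappa> a tone = ttrunc \<kappa> a"
proof
  fix w
  have "(\<Sum>i\<le>length w. a (take i w) * tone (drop i w)) = (\<Sum>i\<le>length w. if i = length w then a w else 0)"
    by (rule sum.cong) (auto simp: tone_def)
  then show "tmul \<kappa> a tone w = ttrunc \<kappa> a w"
    by (simp add: tmul_def ttrunc_def)
qed

lemma tmul_lincomb_left:
  "tmul \<kappa> (\<lambda>v. \<Sum>x\<in>S. c x * f x v) b w = (\<Sum>x\<in>S. c x * tmul \<kappa> (f x) b w)"
  by (simp add: tmul_def sum_distrib_left sum_distrib_right mult.assoc sum.swap[of _ S])

lemma tmul_lincomb_right: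
  "tmul \<kappa> a (\<lambda>v. \<Sum>x\<in>S. c x * f x v) w = (\<Sum>x\<in>S. c x * tmul \<kappa> a (f x) w)"
  by (simp add: tmul_def sum_distrib_left sum_distrib_right mult.assoc mult.left_commute
      sum.swap[of _ S])

lemma tmul_sum_right: "tmul \<kappa> a (\<lambda>v. \<Sum>x\<in>S. f x v) w = (\<Sum>x\<in>S. tmul \<kappa> a (f x) w)"
  using tmul_lincomb_right[of \<kappa> a "\<lambda>_. 1" f S w] by simp

lemma tmul_diff_left: "tmul \<kappa> (\<lambda>v. a v - a' v) b w = tmul \<kappa> a b w - tmul \<kappa> a' b w"
  by (simp add: tmul_def left_diff_distrib sum_subtractf)

lemma tmul_diff_right: "tmul \<kappa> a (\<lambda>v. b v - b' v) w = tmul \<kappa> a b w - tmul \<kappa> a b' w"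
  by (simp add: tmul_def right_diff_distrib sum_subtractf)

lemma tmul_assoc: "tmul \<kappa> (tmul \<kappa> a b) c = tmul \<kappa> a (tmul \<kappa> b c)"
proof
  fix w
  show "tmul \<kappa> (tmul \<kappa> a b) c w = tmul \<kappa> a (tmul \<kappa> b c) w"
  proof (cases "length w \<le> \<kappa>")
    case False
    then show ?thesis by (simp add: tmul_def)
  next
    case True
    define n where "n = length w"
    define g where "g i j = a (take i w) * b (take j (drop i w)) * c (drop (i + j) w)" for i j
    have left: "tmul \<kappa> (tmul \<kappa> a b) c w = (\<Sum>k\<le>n. \<Sum>i\<le>k. g i (k - i))"
      unfolding tmul_def n_def[symmetric] using True
      by (auto simp: n_def g_def sum_distrib_right min_def take_drop intro!: sum.cong)
    have right: "tmul \<kappa> a (tmul \<kappa> b c) w = (\<Sum>i\<le>n. \<Sum>j\<le>n - i. g i j)"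
      unfolding tmul_def n_def[symmetric] using True
      by (auto simp: n_def g_def sum_distrib_left mult.assoc add.commute intro!: sum.cong)
    have "{(i, j). i + j \<le> n} = (SIGMA i:{..n}. {..n - i})" by auto
    then have "(\<Sum>i\<le>n. \<Sum>j\<le>n - i. g i j) = (\<Sum>(i, j)\<in>{(i, j). i + j \<le> n}. g i j)"
      by (simp add: sum.Sigma)
    also have "\<dots> = (\<Sum>k\<le>n. \<Sum>i\<le>k. g i (k - i))"
      by (rule sum.triangle_reindex_eq)
    finally show ?thesis using left right by simp
  qed
qed

lemma tpow_ttrunc [simp]: "ttrunc \<kappa> (tpow \<kappa> u n) = tpow \<kappa> u n"
  by (cases n) simp_all

lemma tpow_add: "tmul \<kappa> (tpow \<kappa> u i) (tpow \<kappa> u j) = tpow \<kappa> u (i + j)"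
  by (induction i) (simp_all add: tmul_tone_left tmul_assoc)

lemma tpow_eq_0_below_degree:
  assumes "u [] = 0" and "length w < n"
  shows "tpow \<kappa> u n w = 0"
  using assms(2)
proof (induction n arbitrary: w)
  case 0
  then show ?case by simp
next
  case (Suc n)
  have "u (take i w) * tpow \<kappa> u n (drop i w) = 0" if "i \<le> length w" for i
    using Suc that assms(1) by (cases "i = 0") auto
  then show ?case by (auto simp: tmul_def intro!: sum.neutral)
qed

lemma tpow_eq_0_above_truncation:
  assumes "u [] = 0" and "\<kappa> < n"
  shows "tpow \<kappa> u n w = 0"
proof (cases "length w < n")
  case True
  then show ?thesis using tpow_eq_0_below_degree assms(1) by blast
next
  case False
  obtain n' where "n = Suc n'" using assms(2) by (cases n) auto
  then show ?thesis using False assms(2) by (simp add: tmul_def)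
qed

text \<open>Meaningful for \<open>u [] = 0\<close>: then the powers of \<open>u\<close> beyond the truncation level
  vanish, so this finite sum is the whole series.\<close>
definition tseries :: "nat \<Rightarrow> tensor \<Rightarrow> real fps \<Rightarrow> tensor" where
  "tseries \<kappa> u f = (\<lambda>w. \<Sum>n\<le>\<kappa>. f $ n * tpow \<kappa> u n w)"

lemma tseries_one: "tseries \<kappa> u 1 = tone"
proof
  fix w
  have "(\<Sum>n\<le>\<kappa>. (1 :: real fps) $ n * tpow \<kappa> u n w) = (\<Sum>n\<le>\<kappa>. if n = 0 then tone w else 0)"
    by (rule sum.cong) auto
  then show "tseries \<kappa> u 1 w = tone w" by (simp add: tseries_def)
qed

lemma tseries_mult:
  assumes "u [] = 0"
  shows "tmul \<kappa> (tseries \<kappa> u f) (tseries \<kappa> u g) = tseries \<kappa> u (f * g)"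
proof
  fix w
  define h where "h i j = f $ i * g $ j * tpow \<kappa> u (i + j) w" for i j
  have "tmul \<kappa> (tseries \<kappa> u f) (tseries \<kappa> u g) w = (\<Sum>(i, j)\<in>{..\<kappa>} \<times> {..\<kappa>}. h i j)"
    unfolding tseries_def tmul_lincomb_left tmul_lincomb_right
    by (simp add: h_def tpow_add sum_distrib_left mult.assoc sum.cartesian_product)
  also have "\<dots> = (\<Sum>(i, j)\<in>{(i, j). i + j \<le> \<kappa>}. h i j)"
    by (rule sum.mono_neutral_right)
      (auto simp: h_def tpow_eq_0_above_truncation[where u = u, OF assms] intro: ccontr)
  also have "\<dots> = (\<Sum>k\<le>\<kappa>. \<Sum>i\<le>k. h i (k - i))"
    by (rule sum.triangle_reindex_eq)
  also have "\<dots> = tseries \<kappa> u (f * g) w"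
    by (simp add: tseries_def h_def fps_mult_nth atLeast0AtMost sum_distrib_right)
  finally show "tmul \<kappa> (tseries \<kappa> u f) (tseries \<kappa> u g) w = tseries \<kappa> u (f * g) w" .
qed

lemma tpow_tseries: "u [] = 0 \<Longrightarrow> tpow \<kappa> (tseries \<kappa> u f) j = tseries \<kappa> u (f ^ j)"
  by (induction j) (simp_all add: tseries_one tseries_mult)

lemma sum_tseries:
  "finite S \<Longrightarrow> (\<Sum>j\<in>S. c j * tseries \<kappa> u (F j) w) = tseries \<kappa> u (\<Sum>j\<in>S. fps_const (c j) * F j) w"
  by (simp add: tseries_def fps_sum_nth sum_distrib_left sum_distrib_right mult.assoc sum.swap[of _ S])

lemma fps_exp_compose_ln: "fps_exp (1 :: real) oo fps_ln 1 = 1 + fps_X"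
proof -
  have "(fps_exp (1 :: real) - 1) oo fps_ln 1 = fps_X"
    using fps_inv_fps_exp_compose(2)[of "1 :: real"] fps_ln_fps_exp_inv[of "1 :: real"] by simp
  then show ?thesis by (simp add: fps_compose_sub_distrib algebra_simps)
qed

lemma fps_ln_power_nth_below:
  assumes "n < j"
  shows "(fps_ln (1 :: real) ^ j) $ n = 0"
proof -
  have "fps_ln (1 :: real) \<noteq> 0"
  proof
    assume "fps_ln (1 :: real) = 0"
    then have "fps_ln (1 :: real) $ 1 = 0" by simp
    then show False by (simp add: fps_ln_nth)
  qed
  then have "1 \<le> subdegree (fps_ln (1 :: real))"
    using subdegree_eq_0_iff[of "fps_ln (1 :: real)"] by auto
  then have "n < j * subdegree (fps_ln (1 :: real))"
    using assms by (metis less_le_trans mult.right_neutral mult_le_mono2)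
  then show ?thesis by (rule fps_pow_nth_below_subdegree)
qed

lemma truncated_exp_ln_nth:
  assumes "n \<le> \<kappa>"
  shows "(\<Sum>j\<le>\<kappa>. fps_const (1 / fact j) * fps_ln (1 :: real) ^ j) $ n = (if n \<le> 1 then 1 else 0)"
proof -
  have "(\<Sum>j\<le>\<kappa>. fps_const (1 / fact j) * fps_ln (1 :: real) ^ j) $ n
      = (\<Sum>j\<le>n. (1 / fact j) * (fps_ln (1 :: real) ^ j) $ n)"
    by (simp add: fps_sum_nth, rule sum.mono_neutral_right) (use assms fps_ln_power_nth_below in auto)
  also have "\<dots> = (fps_exp (1 :: real) oo fps_ln 1) $ n"
    by (simp add: fps_compose_nth atLeast0AtMost fps_exp_def)
  finally show ?thesis
    by (auto simp: fps_exp_compose_ln fps_X_def)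
qed

lemma tlog_eq_tseries: "tlog \<kappa> a = tseries \<kappa> (\<lambda>v. a v - tone v) (fps_ln 1)"
proof
  fix w
  let ?u = "\<lambda>v. a v - tone v"
  have "tseries \<kappa> ?u (fps_ln 1) w = (\<Sum>n\<in>insert 0 {1..\<kappa>}. fps_ln 1 $ n * tpow \<kappa> ?u n w)"
    unfolding tseries_def by (rule sum.cong) auto
  also have "\<dots> = (\<Sum>n=1..\<kappa>. fps_ln 1 $ n * tpow \<kappa> ?u n w)"
    by simp
  also have "\<dots> = (\<Sum>k=1..\<kappa>. ((-1) ^ (k + 1) / real k) * tpow \<kappa> ?u k w)"
  proof (rule sum.cong)
    fix k :: nat
    assume "k \<in> {1..\<kappa>}"
    then have "(-1 :: real) ^ (k + 1) = (-1) ^ (k - 1)"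
      by (cases k) auto
    then show "fps_ln 1 $ k * tpow \<kappa> ?u k w = (-1) ^ (k + 1) / real k * tpow \<kappa> ?u k w"
      using \<open>k \<in> {1..\<kappa>}\<close> by (simp add: fps_ln_nth)
  qed simp
  finally show "tlog \<kappa> a w = tseries \<kappa> ?u (fps_ln 1) w"
    by (simp add: tlog_def)
qed

lemma texp_tlog:
  assumes "a [] = 1" and "1 \<le> \<kappa>" and "length w \<le> \<kappa>"
  shows "texp \<kappa> (tlog \<kappa> a) w = a w"
proof -
  let ?u = "\<lambda>v. a v - tone v"
  let ?L = "fps_ln (1 :: real)"
  have u0: "?u [] = 0" using assms(1) by (simp add: tone_def)
  have "texp \<kappa> (tlog \<kappa> a) w = tseries \<kappa> ?u (\<Sum>j\<le>\<kappa>. fps_const (1 / fact j) * ?L ^ j) w"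
    unfolding texp_def tlog_eq_tseries tpow_tseries[where u = ?u, OF u0] by (rule sum_tseries) simp
  also have "\<dots> = (\<Sum>n\<le>\<kappa>. (if n \<le> 1 then 1 else 0) * tpow \<kappa> ?u n w)"
    unfolding tseries_def by (rule sum.cong) (simp_all add: truncated_exp_ln_nth)
  also have "\<dots> = (\<Sum>n\<in>{0, 1}. tpow \<kappa> ?u n w)"
    by (rule sum.mono_neutral_cong_right) (use assms(2) in auto)
  also have "\<dots> = a w"
    using assms(3) by (simp add: tmul_tone_right ttrunc_def)
  finally show ?thesis .
qed

lemma lie_alg_Nil: "x \<in> lie_alg d \<kappa> \<Longrightarrow> x [] = 0"
  by (induction rule: lie_alg.induct) (auto simp: words_def)

lemma texp_Nil: "x [] = 0 \<Longrightarrow> texp \<kappa> x [] = 1"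
  by (simp add: texp_def tpow_eq_0_below_degree tone_def sum.atMost_shift)

lemma expprod_Nil: "\<forall>x\<in>set xs. x [] = 0 \<Longrightarrow> expprod \<kappa> xs [] = 1"
  by (induction xs) (auto simp: expprod_def tprod_def tone_def texp_Nil)

lemma tlog_Nil: "a [] = 1 \<Longrightarrow> tlog \<kappa> a [] = 0"
  by (simp add: tlog_def tpow_eq_0_below_degree tone_def)

lemma finite_compositions: "finite (compositions k m)"
proof (rule finite_subset)
  show "compositions k m \<subseteq> {xs. set xs \<subseteq> {..m} \<and> length xs = k}"
    by (auto simp: compositions_def intro: member_le_sum_list)
  show "finite {xs. set xs \<subseteq> {..m} \<and> length xs = k}"
    by (rule finite_lists_length_eq) simp
qed

lemma compositions_0: "compositions 0 m = (if m = 0 then {[]} else {})"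
  by (auto simp: compositions_def)

lemma compositions_Suc:
  "compositions (Suc k) m = (\<lambda>(i, is). i # is) ` (SIGMA i:{1..m}. compositions k (m - i))"
proof (intro equalityI subsetI)
  fix xs
  assume "xs \<in> compositions (Suc k) m"
  then obtain i ys where "xs = i # ys" "length ys = k" "0 < i" "\<forall>j\<in>set ys. 0 < j"
    "i + sum_list ys = m"
    by (cases xs) (auto simp: compositions_def)
  then show "xs \<in> (\<lambda>(i, is). i # is) ` (SIGMA i:{1..m}. compositions k (m - i))"
    by (auto simp: compositions_def image_iff)
qed (auto simp: compositions_def)

lemma tmul_proj_left:
  assumes "length w \<le> \<kappa>" and "i \<le> length w"
  shows "tmul \<kappa> (proj i H) T w = H (take i w) * T (drop i w)"
proof -
  have "(\<Sum>l\<le>length w. proj i H (take l w) * T (drop l w))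
      = (\<Sum>l\<le>length w. if l = i then H (take i w) * T (drop i w) else 0)"
    by (rule sum.cong) (auto simp: proj_def min_def)
  then show ?thesis using assms by (simp add: tmul_def)
qed

lemma tpow_eq_sum_compositions:
  assumes "H [] = 0" and "length w = m" and "m \<le> \<kappa>"
  shows "tpow \<kappa> H k w = (\<Sum>is\<in>compositions k m. tprod \<kappa> (map (\<lambda>i. proj i H) is) w)"
  using assms(2,3)
proof (induction k arbitrary: w m)
  case 0
  then show ?case by (auto simp: compositions_0 tprod_def tone_def)
next
  case (Suc k)
  let ?T = "\<lambda>is. tprod \<kappa> (map (\<lambda>i. proj i H) is)"
  have "tpow \<kappa> H (Suc k) w = (\<Sum>i\<le>m. H (take i w) * tpow \<kappa> H k (drop i w))"
    using Suc.prems by (simp add: tmul_def)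
  also have "\<dots> = (\<Sum>i\<in>{1..m}. H (take i w) * tpow \<kappa> H k (drop i w))"
    by (rule sum.mono_neutral_right) (use assms(1) in \<open>auto simp: Suc_le_eq\<close>)
  also have "\<dots> = (\<Sum>i\<in>{1..m}. \<Sum>is\<in>compositions k (m - i). H (take i w) * ?T is (drop i w))"
    by (rule sum.cong) (use Suc in \<open>auto simp: sum_distrib_left\<close>)
  also have "\<dots> = (\<Sum>(i, is)\<in>(SIGMA i:{1..m}. compositions k (m - i)). ?T (i # is) w)"
    by (subst sum.Sigma) (use Suc.prems in \<open>auto simp: finite_compositions tprod_def tmul_proj_left
        intro!: sum.cong\<close>)
  also have "\<dots> = (\<Sum>is\<in>compositions (Suc k) m. ?T is w)"
    unfolding compositions_Suc by (subst sum.reindex) (auto simp: inj_on_def intro!: sum.cong)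
  finally show ?case .
qed

lemma tensor_eq_sum_compositions_tlog:
  assumes "a [] = 1" and "1 \<le> m" and "m \<le> \<kappa>" and "length w = m"
  shows "a w = (\<Sum>k=1..m. (1 / fact k) *
                 (\<Sum>is\<in>compositions k m. tprod \<kappa> (map (\<lambda>i. proj i (tlog \<kappa> a)) is) w))"
proof -
  let ?H = "tlog \<kappa> a"
  have H0: "?H [] = 0" using tlog_Nil[where a = a, OF assms(1)] .
  have "a w = (\<Sum>k\<le>\<kappa>. (1 / fact k) * tpow \<kappa> ?H k w)"
    using texp_tlog[where a = a, OF assms(1)] assms(2-4) by (simp add: texp_def)
  also have "\<dots> = (\<Sum>k=1..m. (1 / fact k) * tpow \<kappa> ?H k w)"
    by (rule sum.mono_neutral_right)
      (use assms tpow_eq_0_below_degree[where u = ?H, OF H0] in \<open>auto simp: tone_def not_le Suc_le_eq\<close>)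
  finally show ?thesis
    using tpow_eq_sum_compositions[where H = ?H, OF H0 assms(4,3)] by simp
qed

definition telescope :: "nat \<Rightarrow> (nat \<Rightarrow> tensor) \<Rightarrow> (nat \<Rightarrow> tensor) \<Rightarrow> nat list \<Rightarrow> tensor" where
  "telescope \<kappa> g g' is = (\<lambda>w. \<Sum>j<length is.
     tprod \<kappa> (map g (take j is) @ [(\<lambda>v. g (is ! j) v - g' (is ! j) v)] @ map g' (drop (Suc j) is)) w)"

lemma tprod_diff_eq_telescope:
  "tprod \<kappa> (map g is) w - tprod \<kappa> (map g' is) w = telescope \<kappa> g g' is w"
proof (induction "is" arbitrary: w)
  case Nil
  then show ?case by (simp add: telescope_def)
next
  case (Cons i "is")
  have IH: "telescope \<kappa> g g' is = (\<lambda>v. tprod \<kappa> (map g is) v - tprod \<kappa> (map g' is) v)"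
    using Cons.IH by simp
  have "telescope \<kappa> g g' (i # is) w
      = tmul \<kappa> (\<lambda>v. g i v - g' i v) (tprod \<kappa> (map g' is)) w
        + tmul \<kappa> (g i) (telescope \<kappa> g g' is) w"
    by (simp only: telescope_def length_Cons sum.lessThan_Suc_shift)
      (simp add: tprod_def tmul_sum_right)
  also have "\<dots> = tprod \<kappa> (map g (i # is)) w - tprod \<kappa> (map g' (i # is)) w"
    by (simp add: IH tmul_diff_left tmul_diff_right tprod_def)
  finally show ?case by simp
qed

lemma tnorm_cong: "(\<And>w. w \<in> words d m \<Longrightarrow> f w = g w) \<Longrightarrow> tnorm d m f = tnorm d m g"
  by (simp add: tnorm_def)

lemma tnorm_sum_le: "finite S \<Longrightarrow> tnorm d m (\<lambda>w. \<Sum>x\<in>S. F x w) \<le> (\<Sum>x\<in>S. tnorm d m (F x))"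
proof (induction S rule: finite_induct)
  case empty
  then show ?case by (simp add: tnorm_def)
next
  case (insert x S)
  have "tnorm d m (\<lambda>w. F x w + (\<Sum>x\<in>S. F x w)) \<le> tnorm d m (F x) + tnorm d m (\<lambda>w. \<Sum>x\<in>S. F x w)"
    unfolding tnorm_def L2_set_def[symmetric] by (rule L2_set_triangle_ineq)
  then show ?case using insert by simp
qed

lemma tnorm_mult_nonneg: "0 \<le> c \<Longrightarrow> tnorm d m (\<lambda>w. c * f w) = c * tnorm d m f"
  unfolding tnorm_def L2_set_def[symmetric] by (simp add: L2_set_right_distrib)

lemma tnorm_double_sum_le:
  assumes "finite K" and "\<And>k. k \<in> K \<Longrightarrow> finite (I k)" and "\<And>k. k \<in> K \<Longrightarrow> 0 \<le> c k"
  shows "tnorm d m (\<lambda>w. \<Sum>k\<in>K. c k * (\<Sum>i\<in>I k. F k i w))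
    \<le> (\<Sum>k\<in>K. c k * (\<Sum>i\<in>I k. tnorm d m (F k i)))"
proof -
  have "tnorm d m (\<lambda>w. \<Sum>k\<in>K. c k * (\<Sum>i\<in>I k. F k i w))
      \<le> (\<Sum>k\<in>K. tnorm d m (\<lambda>w. c k * (\<Sum>i\<in>I k. F k i w)))"
    by (rule tnorm_sum_le[OF assms(1)])
  also have "\<dots> \<le> (\<Sum>k\<in>K. c k * (\<Sum>i\<in>I k. tnorm d m (F k i)))"
    by (rule sum_mono) (simp add: assms tnorm_mult_nonneg mult_left_mono tnorm_sum_le)
  finally show ?thesis .
qed

theorem lemma11p3:
  fixes d \<kappa> m :: nat and xs ys :: "tensor list"
  assumes "1 \<le> \<kappa>"
    and "length xs = length ys"
    and "\<forall>x\<in>set xs. x \<in> lie_alg d \<kappa>"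
    and "\<forall>y\<in>set ys. y \<in> lie_alg d \<kappa>"
    and "1 \<le> m" and "m \<le> \<kappa>"
  shows "tnorm d m (proj m (\<lambda>w. expprod \<kappa> xs w - expprod \<kappa> ys w))
    \<le> (\<Sum>k=1..m. (1 / fact k) *
         (\<Sum>is\<in>compositions k m.
            tnorm d m (\<lambda>w. \<Sum>j<k.
              tprod \<kappa> (map (Hcomp \<kappa> xs) (take j is)
                       @ [(\<lambda>v. Hcomp \<kappa> xs (is ! j) v - Hcomp \<kappa> ys (is ! j) v)]
                       @ map (Hcomp \<kappa> ys) (drop (Suc j) is)) w)))"
    (is "_ \<le> ?rhs")
proof -
  \<comment> \<open>The Lie algebra hypotheses are only used to make the scalar parts vanish;
    the lengths of \<open>xs\<close> and \<open>ys\<close> need not agree.\<close>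
  let ?g = "Hcomp \<kappa> xs" and ?g' = "Hcomp \<kappa> ys"
  have scalar_one: "expprod \<kappa> xs [] = 1" "expprod \<kappa> ys [] = 1"
    using assms(3,4) by (auto intro!: expprod_Nil simp: lie_alg_Nil)
  have expansion: "proj m (\<lambda>w. expprod \<kappa> xs w - expprod \<kappa> ys w) w
      = (\<Sum>k=1..m. (1 / fact k) * (\<Sum>is\<in>compositions k m. telescope \<kappa> ?g ?g' is w))"
    if "w \<in> words d m" for w
    using that assms(5,6)
      tensor_eq_sum_compositions_tlog[where a = "expprod \<kappa> xs", OF scalar_one(1), of m \<kappa> w]
      tensor_eq_sum_compositions_tlog[where a = "expprod \<kappa> ys", OF scalar_one(2), of m \<kappa> w]
    by (simp add: words_def proj_def Hcomp_def[abs_def] tprod_diff_eq_telescope[symmetric]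
        sum_subtractf right_diff_distrib)
  have "tnorm d m (proj m (\<lambda>w. expprod \<kappa> xs w - expprod \<kappa> ys w))
      = tnorm d m (\<lambda>w. \<Sum>k=1..m. (1 / fact k) * (\<Sum>is\<in>compositions k m. telescope \<kappa> ?g ?g' is w))"
    by (rule tnorm_cong) (rule expansion)
  also have "\<dots> \<le> (\<Sum>k=1..m. (1 / fact k) * (\<Sum>is\<in>compositions k m. tnorm d m (telescope \<kappa> ?g ?g' is)))"
    by (rule tnorm_double_sum_le) (simp_all add: finite_compositions)
  also have "\<dots> = ?rhs"
    by (auto simp: telescope_def compositions_def intro!: sum.cong)
  finally show ?thesis .
qed

end
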